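(* Let $\mathcal{A}$ be a separating union-closed family with base set $[n]$ and height $h=4$, and suppose $|\mathcal{B}(\mathcal{A})|=3$. Let $B=b(\mathcal{A}_{<n/2})$. Then $|B| \in \{n-1, n\}$.
   Context: A family of sets $\mathcal{A}$ is union-closed if it is a finite family of distinct finite sets with at least one nonempty member set, and $X,Y\in\mathcal{A}$ implies $X\cup Y\in\mathcal{A}$ (the empty set may be a member). For a family $\mathcal{F}$, $b(\mathcal{F})=\bigcup_{F\in\mathcal{F}}F$; the base set $b(\mathcal{A})$ is denoted $[n]=\{1,\dots,n\}$. $\mathcal{A}$ is separating if for any two distinct $x,y\in[n]$ there is $A\in\mathcal{A}$ containing exactly one of $x,y$. A chain in $\mathcal{A}$ is a subfamily any two distinct members of which are comparable under proper inclusion; the height $h$ of $\mathcal{A}$ is the maximum size of a chain in $\mathcal{A}$. For real $x\ge 0$, $\mathcal{A}_{<x}=\{A\in\mathcal{A} : |A|<x\}$. For $\mathcal{S}\subseteq\mathcal{A}$ and $S\in\mathcal{S}$, $\mathrm{irr}_{\mathcal{S}}(S)=\{s\in S : s\notin b(\mathcal{S}\setminus\{S\})\}$, and $\mathcal{S}$ is irredundant if $\mathrm{irr}_{\mathcal{S}}(S)\neq\emptyset$ for every $S\in\mathcal{S}$. With $B=b(\mathcal{A}_{<n/2})$, $\mathcal{B}(\mathcal{A})$ denotes any irredundant subfamily of $\mathcal{A}_{<n/2}$ of minimum size such that $b(\mathcal{B}(\mathcal{A}))=B$. *)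

theory Defs
  imports Complex_Main
begin

definition union_closed :: "'a set set \<Rightarrow> bool" where
  "union_closed \<A> \<longleftrightarrow> finite \<A> \<and> (\<forall>X\<in>\<A>. finite X) \<and> (\<exists>X\<in>\<A>. X \<noteq> {})
     \<and> (\<forall>X\<in>\<A>. \<forall>Y\<in>\<A>. X \<union> Y \<in> \<A>)"

definition separating :: "'a set set \<Rightarrow> bool" where
  "separating \<A> \<longleftrightarrow> (\<forall>x\<in>\<Union>\<A>. \<forall>y\<in>\<Union>\<A>. x \<noteq> y \<longrightarrow>
     (\<exists>A\<in>\<A>. (x \<in> A \<and> y \<notin> A) \<or> (y \<in> A \<and> x \<notin> A)))"

definition is_chain :: "'a set set \<Rightarrow> bool" where
  "is_chain \<C> \<longleftrightarrow> (\<forall>X\<in>\<C>. \<forall>Y\<in>\<C>. X \<noteq> Y \<longrightarrow> X \<subset> Y \<or> Y \<subset> X)"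

definition height :: "'a set set \<Rightarrow> nat" where
  "height \<A> = Max (card ` {\<C>. \<C> \<subseteq> \<A> \<and> is_chain \<C>})"

definition below :: "'a set set \<Rightarrow> real \<Rightarrow> 'a set set" where
  "below \<A> x = {A\<in>\<A>. real (card A) < x}"

definition irr :: "'a set set \<Rightarrow> 'a set \<Rightarrow> 'a set" where
  "irr \<S> S = {s\<in>S. s \<notin> \<Union>(\<S> - {S})}"

definition irredundant :: "'a set set \<Rightarrow> bool" where
  "irredundant \<S> \<longleftrightarrow> (\<forall>S\<in>\<S>. irr \<S> S \<noteq> {})"

definition small_base :: "'a set set \<Rightarrow> nat \<Rightarrow> 'a set" where
  "small_base \<A> n = \<Union>(below \<A> (real n / 2))"

definition calB_size :: "'a set set \<Rightarrow> nat \<Rightarrow> nat" where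
  "calB_size \<A> n = (LEAST k. \<exists>\<S>. \<S> \<subseteq> below \<A> (real n / 2) \<and> irredundant \<S>
      \<and> \<Union>\<S> = small_base \<A> n \<and> card \<S> = k)"

end

theory Submission
  imports Defs
begin

text \<open>
  The partial unions of an irredundant subfamily of \<open>\<A>\<close> form a strict chain in
  \<open>\<A>\<close>, since every new member contributes a point of its own; so \<open>\<B>(\<A>)\<close>
  yields a chain of three members of \<open>\<A>\<close> topped by \<open>B\<close>. If two points
  \<open>x \<noteq> y\<close> of \<open>[n]\<close> lay outside \<open>B\<close>, a member \<open>A\<close> separating them
  would give \<open>B \<subset> B \<union> A \<subset> [n]\<close>, extending the chain to five members
  and contradicting \<open>h = 4\<close>. Only the irredundancy of \<open>\<B>(\<A>)\<close> is used,
  not the smallness of its members.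
\<close>

lemma Union_remove_eq_if_irr_empty:
  assumes "irr \<S> T = {}" "T \<in> \<S>"
  shows "\<Union>(\<S> - {T}) = \<Union>\<S>"
  using assms unfolding irr_def by blast

lemma exists_irredundant_subfamily:
  assumes "finite \<F>"
  shows "\<exists>\<S>\<subseteq>\<F>. irredundant \<S> \<and> \<Union>\<S> = \<Union>\<F>"
  using assms
proof (induction rule: finite_psubset_induct)
  case (psubset \<F>)
  show ?case
  proof (cases "irredundant \<F>")
    case True
    then show ?thesis
      by blast
  next
    case False
    then obtain T where T: "T \<in> \<F>" "irr \<F> T = {}"
      unfolding irredundant_def by blast
    obtain \<S> where \<S>: "\<S> \<subseteq> \<F> - {T}" "irredundant \<S>" "\<Union>\<S> = \<Union>(\<F> - {T})"
      using psubset.IH[of "\<F> - {T}"] T(1) by blast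
    have "\<Union>(\<F> - {T}) = \<Union>\<F>"
      using Union_remove_eq_if_irr_empty T by blast
    with \<S> show ?thesis
      by (metis Diff_subset order_trans)
  qed
qed

lemma calB_size_witness:
  assumes "finite \<A>"
  obtains \<S> where "\<S> \<subseteq> below \<A> (real n / 2)" "irredundant \<S>"
    "\<Union>\<S> = small_base \<A> n" "card \<S> = calB_size \<A> n"
proof -
  define P where "P k \<longleftrightarrow> (\<exists>\<S>. \<S> \<subseteq> below \<A> (real n / 2) \<and> irredundant \<S>
      \<and> \<Union>\<S> = small_base \<A> n \<and> card \<S> = k)" for k
  have "finite (below \<A> (real n / 2))"
    using assms unfolding below_def by simp
  then obtain \<S> where "\<S> \<subseteq> below \<A> (real n / 2)" "irredundant \<S>" "\<Union>\<S> = small_base \<A> n"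
    unfolding small_base_def by (metis exists_irredundant_subfamily)
  then have "P (card \<S>)"
    unfolding P_def by blast
  then have "P (LEAST k. P k)"
    by (rule LeastI)
  then show ?thesis
    using that unfolding P_def calB_size_def by blast
qed

lemma irr_antimono:
  assumes "\<R> \<subseteq> \<S>"
  shows "irr \<S> X \<subseteq> irr \<R> X"
  using assms unfolding irr_def by blast

lemma irredundant_subset:
  assumes "irredundant \<S>" "\<R> \<subseteq> \<S>"
  shows "irredundant \<R>"
  unfolding irredundant_def
proof
  fix X assume "X \<in> \<R>"
  then have "irr \<S> X \<noteq> {}"
    using assms unfolding irredundant_def by blast
  then show "irr \<R> X \<noteq> {}"
    using irr_antimono[OF assms(2)] by blast
qed

lemma irredundant_Union_psubset_insert:
  assumes "irredundant \<S>" "T \<in> \<S>" "\<R> \<subseteq> \<S> - {T}"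
  shows "\<Union>\<R> \<subset> \<Union>(insert T \<R>)"
proof -
  obtain t where "t \<in> T" "t \<notin> \<Union>(\<S> - {T})"
    using assms(1,2) unfolding irredundant_def irr_def by blast
  then show ?thesis
    using assms(3) by blast
qed

lemma union_closed_Union_mem:
  assumes "union_closed \<A>" "\<S> \<subseteq> \<A>" "\<S> \<noteq> {}"
  shows "\<Union>\<S> \<in> \<A>"
proof -
  have "finite \<S>"
    using assms(1,2) finite_subset unfolding union_closed_def by blast
  from this assms(3,2) show ?thesis
  proof (induction rule: finite_ne_induct)
    case (insert S \<S>)
    then show ?case
      using assms(1) unfolding union_closed_def by simp
  qed simp
qed

lemma union_closed_irredundant_strict_chain:
  assumes "union_closed \<A>" "\<S> \<subseteq> \<A>" "irredundant \<S>" "\<S> \<noteq> {}"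
  shows "\<exists>Xs. sorted_wrt (\<subset>) (Xs @ [\<Union>\<S>]) \<and> set (Xs @ [\<Union>\<S>]) \<subseteq> \<A> \<and> length Xs + 1 = card \<S>"
proof -
  have "finite \<S>"
    using assms(1,2) finite_subset unfolding union_closed_def by blast
  from this assms(4,2,3) show ?thesis
  proof (induction rule: finite_ne_induct)
    case (singleton T)
    then show ?case
      by simp
  next
    case (insert T \<T>)
    then obtain Xs where Xs: "sorted_wrt (\<subset>) (Xs @ [\<Union>\<T>])" "set (Xs @ [\<Union>\<T>]) \<subseteq> \<A>"
        "length Xs + 1 = card \<T>"
      using irredundant_subset[of "insert T \<T>" \<T>] by blast
    have "\<Union>\<T> \<subset> \<Union>(insert T \<T>)"
      using insert.prems(2) insert.hyps(3) by (intro irredundant_Union_psubset_insert) auto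
    moreover have "\<Union>(insert T \<T>) \<in> \<A>"
      using insert.prems(1) by (intro union_closed_Union_mem[OF assms(1)]) auto
    ultimately have "sorted_wrt (\<subset>) ((Xs @ [\<Union>\<T>]) @ [\<Union>(insert T \<T>)])"
        "set ((Xs @ [\<Union>\<T>]) @ [\<Union>(insert T \<T>)]) \<subseteq> \<A>"
      using Xs(1,2) unfolding successively_conv_sorted_wrt[OF transp_on_less, symmetric]
      by (simp_all add: successively_append_iff)
    moreover have "length (Xs @ [\<Union>\<T>]) + 1 = card (insert T \<T>)"
      using Xs(3) insert.hyps by simp
    ultimately show ?case
      by blast
  qed
qed

lemma height_ge_length_strict_chain:
  assumes "finite \<A>" "sorted_wrt (\<subset>) Xs" "set Xs \<subseteq> \<A>"
  shows "length Xs \<le> height \<A>"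
proof -
  have "distinct Xs"
    using assms(2) by (induction Xs) auto
  have "is_chain (set Xs)"
    unfolding is_chain_def
  proof (intro ballI impI)
    fix X Y assume "X \<in> set Xs" "Y \<in> set Xs" "X \<noteq> Y"
    then obtain i j where "i < length Xs" "j < length Xs" "X = Xs ! i" "Y = Xs ! j" "i \<noteq> j"
      by (metis in_set_conv_nth)
    then show "X \<subset> Y \<or> Y \<subset> X"
      using assms(2) by (metis linorder_neqE_nat sorted_wrt_iff_nth_less)
  qed
  moreover have "finite {\<C>. \<C> \<subseteq> \<A> \<and> is_chain \<C>}"
    by (rule finite_subset[of _ "Pow \<A>"]) (use assms(1) in auto)
  moreover have "set Xs \<in> {\<C>. \<C> \<subseteq> \<A> \<and> is_chain \<C>}"
    using assms(3) \<open>is_chain (set Xs)\<close> by blast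
  ultimately have "card (set Xs) \<le> height \<A>"
    unfolding height_def by (intro Max_ge finite_imageI imageI)
  with \<open>distinct Xs\<close> show ?thesis
    by (simp add: distinct_card)
qed

lemma separating_psubset_between:
  assumes "union_closed \<A>" "separating \<A>" "X \<in> \<A>"
    and "x \<in> \<Union>\<A> - X" "y \<in> \<Union>\<A> - X" "x \<noteq> y"
  obtains Y where "Y \<in> \<A>" "X \<subset> Y" "Y \<subset> \<Union>\<A>"
proof -
  obtain A u v where "A \<in> \<A>" "u \<in> A" "v \<notin> A" "u \<in> \<Union>\<A> - X" "v \<in> \<Union>\<A> - X"
    using assms(2,4-6) unfolding separating_def by blast
  moreover have "X \<union> A \<in> \<A>"
    using assms(1,3) \<open>A \<in> \<A>\<close> unfolding union_closed_def by blast
  ultimately show ?thesis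
  proof (intro that)
    show "X \<subset> X \<union> A"
      using \<open>u \<in> A\<close> \<open>u \<in> \<Union>\<A> - X\<close> by blast
    show "X \<union> A \<subset> \<Union>\<A>"
      using \<open>X \<in> \<A>\<close> \<open>A \<in> \<A>\<close> \<open>v \<notin> A\<close> \<open>v \<in> \<Union>\<A> - X\<close> by blast
  qed
qed

lemma height_ge_length_strict_chain_extension:
  assumes "union_closed \<A>" "separating \<A>"
    and "sorted_wrt (\<subset>) (Xs @ [X])" "set (Xs @ [X]) \<subseteq> \<A>"
    and "x \<in> \<Union>\<A> - X" "y \<in> \<Union>\<A> - X" "x \<noteq> y"
  shows "length Xs + 3 \<le> height \<A>"
proof -
  have "X \<in> \<A>"
    using assms(4) by simp
  obtain Y where Y: "Y \<in> \<A>" "X \<subset> Y" "Y \<subset> \<Union>\<A>"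
    by (rule separating_psubset_between[OF assms(1,2) \<open>X \<in> \<A>\<close> assms(5-7)])
  have "\<Union>\<A> \<in> \<A>"
    using \<open>X \<in> \<A>\<close> by (intro union_closed_Union_mem[OF assms(1)]) auto
  have "sorted_wrt (\<subset>) (Xs @ [X, Y, \<Union>\<A>])"
    using assms(3) Y unfolding successively_conv_sorted_wrt[OF transp_on_less, symmetric]
    by (simp add: successively_append_iff)
  moreover have "set (Xs @ [X, Y, \<Union>\<A>]) \<subseteq> \<A>"
    using assms(4) Y(1) \<open>\<Union>\<A> \<in> \<A>\<close> by simp
  ultimately have "length (Xs @ [X, Y, \<Union>\<A>]) \<le> height \<A>"
    using assms(1) unfolding union_closed_def by (intro height_ge_length_strict_chain) auto
  then show ?thesis
    by simp
qed

lemma card_mem_if_card_Diff_le_1: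
  assumes "finite U" "B \<subseteq> U" "card (U - B) \<le> 1"
  shows "card B \<in> {card U - 1, card U}"
proof -
  have "card (U - B) = card U - card B"
    using assms(1,2) by (simp add: card_Diff_subset finite_subset)
  moreover have "card B \<le> card U"
    using assms(1,2) by (rule card_mono)
  ultimately show ?thesis
    using assms(3) by auto
qed

theorem propositionF:
  fixes \<A> :: "nat set set" and n :: nat
  assumes "union_closed \<A>"
    and "\<Union>\<A> = {1..n}"
    and "separating \<A>"
    and "height \<A> = 4"
    and "calB_size \<A> n = 3"
  shows "card (small_base \<A> n) \<in> {n - 1, n}"
proof -
  define B where "B = small_base \<A> n"
  have "finite \<A>"
    using assms(1) unfolding union_closed_def by blast
  then obtain \<S> where \<S>: "\<S> \<subseteq> below \<A> (real n / 2)" "irredundant \<S>" "\<Union>\<S> = B" "card \<S> = 3"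
    unfolding B_def assms(5)[symmetric] by (rule calB_size_witness)
  have "\<S> \<subseteq> \<A>"
    using \<S>(1) unfolding below_def by blast
  moreover have "\<S> \<noteq> {}"
    using \<S>(4) by auto
  ultimately obtain Xs where chain: "sorted_wrt (\<subset>) (Xs @ [B])" "set (Xs @ [B]) \<subseteq> \<A>" "length Xs = 2"
    using union_closed_irredundant_strict_chain[OF assms(1) _ \<S>(2)] \<S>(3,4) by auto
  have "x = y" if "x \<in> \<Union>\<A> - B" "y \<in> \<Union>\<A> - B" for x y
  proof (rule ccontr)
    assume "x \<noteq> y"
    from height_ge_length_strict_chain_extension[OF assms(1,3) chain(1,2) that this] chain(3) assms(4)
    show False
      by simp
  qed
  then have "card ({1..n} - B) \<le> 1"
    unfolding assms(2) by (simp add: card_le_Suc0_iff_eq)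
  moreover have "B \<subseteq> {1..n}"
    using chain(2) assms(2) by auto
  ultimately show ?thesis
    using card_mem_if_card_Diff_le_1[of "{1..n}" B] unfolding B_def by simp
qed

end
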